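(* Let $(G,c)\in P_m$ with $G$ connected, and choose a face $f$ of $G$ to be the outer face (so $G$ is viewed as a plane graph). Let $B$ and $W$ denote respectively the number of black and white faces of $G$ other than $f$. Then: - if $f$ is white, $B-W\le \lfloor \frac{m-1}{2}\rfloor$; - if $f$ is black, $B-W\le \lfloor \frac{m-5}{2}\rfloor$.
   Context: $P_m$ is the set of pairs $(G,c)$ where $G$ is a simple graph on $m$ vertices with no isolated vertices, embedded in the $2$-sphere, and $c$ is a coloring of the faces of $G$ in black and white such that every edge bounds exactly one white face and exactly one black face. *)

theory Defs
  imports Main
begin

text \<open>A graph embedded in the 2-sphere is represented combinatorially by a
  rotation system (combinatorial map): a finite set of darts D, a fixed-point-free
  involution alpha on D (pairing the two darts of each edge) and a permutation
  sigma of D (cyclic order of darts around each vertex). The embedding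
  is into the sphere iff the map is connected and V - E + F = 2.\<close>

definition orb :: "('d \<Rightarrow> 'd) \<Rightarrow> 'd \<Rightarrow> 'd set" where
  "orb p d = {(p ^^ n) d | n. True}"

definition vertices_of :: "'d set \<Rightarrow> ('d \<Rightarrow> 'd) \<Rightarrow> 'd set set" where
  "vertices_of D \<sigma> = {orb \<sigma> d | d. d \<in> D}"

definition edges_of :: "'d set \<Rightarrow> ('d \<Rightarrow> 'd) \<Rightarrow> 'd set set" where
  "edges_of D \<alpha> = {orb \<alpha> d | d. d \<in> D}"

definition faces_of :: "'d set \<Rightarrow> ('d \<Rightarrow> 'd) \<Rightarrow> ('d \<Rightarrow> 'd) \<Rightarrow> 'd set set" where
  "faces_of D \<alpha> \<sigma> = {orb (\<sigma> \<circ> \<alpha>) d | d. d \<in> D}"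

definition comb_map :: "'d set \<Rightarrow> ('d \<Rightarrow> 'd) \<Rightarrow> ('d \<Rightarrow> 'd) \<Rightarrow> bool" where
  "comb_map D \<alpha> \<sigma> \<longleftrightarrow> finite D \<and> bij_betw \<sigma> D D \<and>
     (\<forall>d\<in>D. \<alpha> d \<in> D \<and> \<alpha> d \<noteq> d \<and> \<alpha> (\<alpha> d) = d)"

definition map_connected :: "'d set \<Rightarrow> ('d \<Rightarrow> 'd) \<Rightarrow> ('d \<Rightarrow> 'd) \<Rightarrow> bool" where
  "map_connected D \<alpha> \<sigma> \<longleftrightarrow>
     (\<forall>d\<in>D. \<forall>d'\<in>D. (\<lambda>x y. y = \<alpha> x \<or> y = \<sigma> x)\<^sup>*\<^sup>* d d')"

text \<open>Underlying graph is simple: no loops, no multiple edges.\<close>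
definition map_simple :: "'d set \<Rightarrow> ('d \<Rightarrow> 'd) \<Rightarrow> ('d \<Rightarrow> 'd) \<Rightarrow> bool" where
  "map_simple D \<alpha> \<sigma> \<longleftrightarrow>
     (\<forall>d\<in>D. \<alpha> d \<notin> orb \<sigma> d) \<and>
     (\<forall>d\<in>D. \<forall>d'\<in>D. d' \<in> orb \<sigma> d \<and> \<alpha> d' \<in> orb \<sigma> (\<alpha> d) \<longrightarrow> d' = d)"

definition spherical :: "'d set \<Rightarrow> ('d \<Rightarrow> 'd) \<Rightarrow> ('d \<Rightarrow> 'd) \<Rightarrow> bool" where
  "spherical D \<alpha> \<sigma> \<longleftrightarrow>
     int (card (vertices_of D \<sigma>)) - int (card (edges_of D \<alpha>))
       + int (card (faces_of D \<alpha> \<sigma>)) = 2"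

text \<open>Face 2-colouring (True = black, False = white) such that every edge bounds
  exactly one white and one black face: the two sides of the edge {d, alpha d} are
  the faces containing d and alpha d.\<close>
definition proper_face_colouring ::
  "'d set \<Rightarrow> ('d \<Rightarrow> 'd) \<Rightarrow> ('d \<Rightarrow> 'd) \<Rightarrow> ('d set \<Rightarrow> bool) \<Rightarrow> bool" where
  "proper_face_colouring D \<alpha> \<sigma> c \<longleftrightarrow>
     (\<forall>d\<in>D. c (orb (\<sigma> \<circ> \<alpha>) d) \<noteq> c (orb (\<sigma> \<circ> \<alpha>) (\<alpha> d)))"

text \<open>(G,c) in P_m (G given by the combinatorial map (D, alpha, sigma)); 
  no isolated vertices is automatic since vertices are sigma-orbits of darts.\<close>
definition in_P :: "nat \<Rightarrow> 'd set \<Rightarrow> ('d \<Rightarrow> 'd) \<Rightarrow> ('d \<Rightarrow> 'd) \<Rightarrow> ('d set \<Rightarrow> bool) \<Rightarrow> bool" where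
  "in_P m D \<alpha> \<sigma> c \<longleftrightarrow> comb_map D \<alpha> \<sigma> \<and> map_simple D \<alpha> \<sigma> \<and> spherical D \<alpha> \<sigma>
     \<and> card (vertices_of D \<sigma>) = m \<and> proper_face_colouring D \<alpha> \<sigma> c"

end

theory Submission
  imports Defs
begin

text \<open>Every edge consists of two darts, one on a black face and one on a white face, so the
  number of edges equals the number of darts on black faces. In a simple graph every face of a
  properly coloured map has at least three darts (a face of length two would contain both darts of
  an edge), hence \<open>E \<ge> 3 F\<^sub>b\<close>. Euler's formula \<open>m - E + F\<^sub>b + F\<^sub>w = 2\<close> together with
  \<open>F\<^sub>w \<ge> 1\<close> then gives \<open>2 (F\<^sub>b - F\<^sub>w) \<le> m - 3\<close>, which is the claim once the outer face is
  removed from its colour class.\<close>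

lemma funpow_closed:
  assumes "\<And>x. x \<in> D \<Longrightarrow> p x \<in> D" and "d \<in> D"
  shows "(p ^^ n) d \<in> D"
  by (induction n) (use assms in auto)

lemma orb_subset:
  assumes "\<And>x. x \<in> D \<Longrightarrow> p x \<in> D" and "d \<in> D"
  shows "orb p d \<subseteq> D"
  using funpow_closed[of D p, OF assms] unfolding orb_def by blast

lemma self_in_orb: "d \<in> orb p d"
  unfolding orb_def by (metis (mono_tags) funpow_0 mem_Collect_eq)

lemma funpow_in_orb: "(p ^^ n) d \<in> orb p d"
  unfolding orb_def by blast

lemma step_in_orb: "p d \<in> orb p d"
  using funpow_in_orb[where n = 1] by simp

lemma orb_trans:
  assumes "x \<in> orb p d"
  shows "orb p x \<subseteq> orb p d"
proof
  fix y assume "y \<in> orb p x"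
  obtain k n where "x = (p ^^ k) d" "y = (p ^^ n) x"
    using assms \<open>y \<in> orb p x\<close> unfolding orb_def by blast
  then have "y = (p ^^ (n + k)) d"
    by (simp add: funpow_add)
  then show "y \<in> orb p d"
    by (simp add: funpow_in_orb)
qed

lemma finite_orb:
  assumes "finite D" and "\<And>x. x \<in> D \<Longrightarrow> p x \<in> D" and "d \<in> D"
  shows "finite (orb p d)"
  using finite_subset[OF orb_subset[OF assms(2,3)] assms(1)] .

lemma bij_betw_funpow_periodic:
  assumes "finite D" "bij_betw p D D" "d \<in> D"
  obtains n where "n > 0" "(p ^^ n) d = d"
proof -
  have into: "\<And>x. x \<in> D \<Longrightarrow> p x \<in> D"
    using assms(2) bij_betwE by blast
  have "\<not> inj_on (\<lambda>k. (p ^^ k) d) {0..card D}"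
  proof
    assume "inj_on (\<lambda>k. (p ^^ k) d) {0..card D}"
    moreover have "(\<lambda>k. (p ^^ k) d) ` {0..card D} \<subseteq> D"
      using funpow_closed[OF into assms(3)] by auto
    ultimately have "card {0..card D} \<le> card D"
      using card_inj_on_le assms(1) by blast
    then show False by simp
  qed
  then obtain i j where ij: "i < j" "(p ^^ i) d = (p ^^ j) d"
    unfolding inj_on_def by (metis linorder_neqE_nat)
  have "inj_on (p ^^ i) D"
    using bij_betw_funpow[OF assms(2)] bij_betw_def by blast
  moreover have "(p ^^ i) ((p ^^ (j - i)) d) = (p ^^ i) d"
    using ij by (metis add_diff_inverse_nat comp_apply funpow_add not_less_iff_gr_or_eq)
  ultimately have "(p ^^ (j - i)) d = d"
    using inj_onD funpow_closed[of D p, OF into assms(3)] assms(3) by metis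
  with ij(1) show thesis
    using that[of "j - i"] by simp
qed

lemma funpow_fixed: "p x = x \<Longrightarrow> (p ^^ n) x = x"
  by (induction n) auto

lemma orb_sym:
  assumes "finite D" "bij_betw p D D" "d \<in> D" "x \<in> orb p d"
  shows "d \<in> orb p x"
proof -
  obtain k where k: "x = (p ^^ k) d"
    using assms(4) unfolding orb_def by blast
  obtain n where n: "n > 0" "(p ^^ n) d = d"
    using bij_betw_funpow_periodic[OF assms(1-3)] .
  have "(p ^^ (n * k - k)) x = (p ^^ (n * k - k + k)) d"
    unfolding k by (simp add: funpow_add)
  also have "\<dots> = ((p ^^ n) ^^ k) d"
    using n(1) by (simp add: funpow_mult)
  also have "\<dots> = d"
    using funpow_fixed[of "p ^^ n"] n(2) by blast
  finally show ?thesis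
    by (metis funpow_in_orb)
qed

lemma orb_eq:
  assumes "finite D" "bij_betw p D D" "d \<in> D" "x \<in> orb p d"
  shows "orb p x = orb p d"
  using orb_trans[OF assms(4)] orb_trans[OF orb_sym[OF assms]] by blast

lemma orb_disjoint:
  assumes "finite D" "bij_betw p D D" "d \<in> D" "e \<in> D" "orb p d \<noteq> orb p e"
  shows "disjnt (orb p d) (orb p e)"
  using orb_eq[OF assms(1,2,3)] orb_eq[OF assms(1,2,4)] assms(5) unfolding disjnt_def by blast

lemma card_eq_sum_card_orbs:
  assumes "finite D" "bij_betw p D D" "S \<subseteq> D" "\<And>d. d \<in> S \<Longrightarrow> orb p d \<subseteq> S"
  shows "card S = (\<Sum>g \<in> orb p ` S. card g)"
proof -
  have "\<Union> (orb p ` S) = S"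
  proof
    show "\<Union> (orb p ` S) \<subseteq> S"
      using assms(4) by blast
    show "S \<subseteq> \<Union> (orb p ` S)"
      using self_in_orb by fast
  qed
  moreover have "pairwise disjnt (orb p ` S)"
    using orb_disjoint[OF assms(1,2)] assms(3) unfolding pairwise_def by blast
  moreover have "\<forall>g \<in> orb p ` S. finite g"
    using finite_subset[OF assms(4) finite_subset[OF assms(3,1)]] by blast
  ultimately show ?thesis
    using card_Union_disjoint by metis
qed

lemma comb_map_bij_alpha:
  assumes "comb_map D \<alpha> \<sigma>"
  shows "bij_betw \<alpha> D D"
  using assms unfolding comb_map_def by (intro bij_betw_byWitness[where f' = \<alpha>]) auto

lemma comb_map_bij_face:
  assumes "comb_map D \<alpha> \<sigma>"
  shows "bij_betw (\<sigma> \<circ> \<alpha>) D D"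
  using bij_betw_trans[OF comb_map_bij_alpha[OF assms]] assms unfolding comb_map_def by blast

lemma comb_map_orb_alpha:
  assumes "comb_map D \<alpha> \<sigma>" "d \<in> D"
  shows "orb \<alpha> d = {d, \<alpha> d}"
proof -
  have "(\<alpha> ^^ n) d \<in> {d, \<alpha> d}" for n
    using assms unfolding comb_map_def by (induction n) auto
  then have "orb \<alpha> d \<subseteq> {d, \<alpha> d}"
    unfolding orb_def by blast
  then show ?thesis
    using self_in_orb[of d \<alpha>] step_in_orb[of \<alpha> d] by blast
qed

lemma comb_map_card_darts_eq_twice_edges:
  assumes "comb_map D \<alpha> \<sigma>"
  shows "card D = 2 * card (edges_of D \<alpha>)"
proof -
  have edges: "edges_of D \<alpha> = orb \<alpha> ` D"
    unfolding edges_of_def by blast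
  have "card g = 2" if "g \<in> orb \<alpha> ` D" for g
    using that comb_map_orb_alpha[OF assms] assms unfolding comb_map_def by auto
  moreover have "finite D"
    using assms unfolding comb_map_def by blast
  ultimately show ?thesis
    unfolding edges using card_eq_sum_card_orbs[OF _ comb_map_bij_alpha[OF assms], of D]
    by (simp add: orb_subset[of D] assms[unfolded comb_map_def])
qed

lemma card_edges_eq_card_black_darts:
  assumes "comb_map D \<alpha> \<sigma>" "proper_face_colouring D \<alpha> \<sigma> c"
  shows "card (edges_of D \<alpha>) = card {d \<in> D. c (orb (\<sigma> \<circ> \<alpha>) d)}"
proof -
  let ?Db = "{d \<in> D. c (orb (\<sigma> \<circ> \<alpha>) d)}"
  have inv: "\<alpha> d \<in> D \<and> \<alpha> (\<alpha> d) = d" if "d \<in> D" for d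
    using assms(1) that unfolding comb_map_def by blast
  have col: "c (orb (\<sigma> \<circ> \<alpha>) (\<alpha> d)) \<longleftrightarrow> \<not> c (orb (\<sigma> \<circ> \<alpha>) d)" if "d \<in> D" for d
    using assms(2) that unfolding proper_face_colouring_def by blast
  have "bij_betw \<alpha> ?Db (D - ?Db)"
    by (rule bij_betw_byWitness[where f' = \<alpha>]) (use inv col in auto)
  then have "card (D - ?Db) = card ?Db"
    by (simp add: bij_betw_same_card)
  moreover have "finite D"
    using assms(1) unfolding comb_map_def by blast
  then have "card (D - ?Db) = card D - card ?Db" "card ?Db \<le> card D"
    by (simp_all add: card_Diff_subset card_mono)
  ultimately have "card D = 2 * card ?Db"
    by linarith
  then show ?thesis
    using comb_map_card_darts_eq_twice_edges[OF assms(1)] by simp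
qed

lemma simple_face_step_ne:
  assumes "comb_map D \<alpha> \<sigma>" "map_simple D \<alpha> \<sigma>" "d \<in> D"
  shows "(\<sigma> \<circ> \<alpha>) d \<noteq> d"
proof
  assume "(\<sigma> \<circ> \<alpha>) d = d"
  then have "\<alpha> (\<alpha> d) \<in> orb \<sigma> (\<alpha> d)"
    using step_in_orb[of \<sigma> "\<alpha> d"] assms(1,3) unfolding comb_map_def by simp
  then show False
    using assms unfolding comb_map_def map_simple_def by blast
qed

lemma proper_colouring_alpha_notin_face:
  assumes "comb_map D \<alpha> \<sigma>" "proper_face_colouring D \<alpha> \<sigma> c" "d \<in> D"
  shows "\<alpha> d \<notin> orb (\<sigma> \<circ> \<alpha>) d"
proof
  assume "\<alpha> d \<in> orb (\<sigma> \<circ> \<alpha>) d"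
  then have "orb (\<sigma> \<circ> \<alpha>) (\<alpha> d) = orb (\<sigma> \<circ> \<alpha>) d"
    using orb_eq[OF _ comb_map_bij_face[OF assms(1)] assms(3)] assms(1)
    unfolding comb_map_def by blast
  then show False
    using assms(2,3) unfolding proper_face_colouring_def by metis
qed

text \<open>A face of length two would be bounded on both sides by the same edge.\<close>

lemma simple_face_step2_ne:
  assumes "comb_map D \<alpha> \<sigma>" "map_simple D \<alpha> \<sigma>" "proper_face_colouring D \<alpha> \<sigma> c" "d \<in> D"
  shows "(\<sigma> \<circ> \<alpha>) ((\<sigma> \<circ> \<alpha>) d) \<noteq> d"
proof
  assume two_cycle: "(\<sigma> \<circ> \<alpha>) ((\<sigma> \<circ> \<alpha>) d) = d"
  define e where "e = (\<sigma> \<circ> \<alpha>) d"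
  have fin: "finite D" and bij: "bij_betw \<sigma> D D"
    and inv: "\<And>x. x \<in> D \<Longrightarrow> \<alpha> x \<in> D \<and> \<alpha> (\<alpha> x) = x"
    using assms(1) unfolding comb_map_def by blast+
  have eD: "e \<in> D"
    using bij_betwE[OF comb_map_bij_face[OF assms(1)]] assms(4) unfolding e_def by blast
  have "e \<in> orb \<sigma> (\<alpha> d)"
    unfolding e_def by (simp add: step_in_orb)
  moreover have "\<alpha> e \<in> orb \<sigma> d"
  proof -
    have "d \<in> orb \<sigma> (\<alpha> e)"
      using two_cycle step_in_orb[of \<sigma> "\<alpha> e"] unfolding e_def by simp
    then show ?thesis
      using orb_sym[OF fin bij] inv[OF eD] by blast
  qed
  ultimately have "e = \<alpha> d"
    using assms(2) eD inv[OF assms(4)] unfolding map_simple_def by metis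
  then have "\<alpha> d \<in> orb (\<sigma> \<circ> \<alpha>) d"
    unfolding e_def by (metis step_in_orb)
  then show False
    using proper_colouring_alpha_notin_face[OF assms(1,3,4)] by blast
qed

lemma face_card_ge_3:
  assumes "comb_map D \<alpha> \<sigma>" "map_simple D \<alpha> \<sigma>" "proper_face_colouring D \<alpha> \<sigma> c" "d \<in> D"
  shows "3 \<le> card (orb (\<sigma> \<circ> \<alpha>) d)"
proof -
  let ?\<phi> = "\<sigma> \<circ> \<alpha>"
  have into: "\<And>x. x \<in> D \<Longrightarrow> ?\<phi> x \<in> D"
    using bij_betwE[OF comb_map_bij_face[OF assms(1)]] by blast
  have "{d, ?\<phi> d, ?\<phi> (?\<phi> d)} \<subseteq> orb ?\<phi> d"
    using self_in_orb[of d ?\<phi>] funpow_in_orb[where p = ?\<phi> and n = 1 and d = d]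
      funpow_in_orb[where p = ?\<phi> and n = 2 and d = d]
    by (simp add: numeral_2_eq_2)
  moreover have "card {d, ?\<phi> d, ?\<phi> (?\<phi> d)} = 3"
    using simple_face_step_ne[OF assms(1,2,4)] simple_face_step_ne[OF assms(1,2) into[OF assms(4)]]
      simple_face_step2_ne[OF assms(1-4)]
    by (auto simp: card_insert_if)
  moreover have "finite (orb ?\<phi> d)"
    using assms(1) finite_orb[of D ?\<phi>, OF _ into assms(4)] unfolding comb_map_def by simp
  ultimately show ?thesis
    by (metis card_mono)
qed

lemma three_black_faces_le_edges:
  assumes "comb_map D \<alpha> \<sigma>" "map_simple D \<alpha> \<sigma>" "proper_face_colouring D \<alpha> \<sigma> c"
  shows "3 * card {g \<in> faces_of D \<alpha> \<sigma>. c g} \<le> card (edges_of D \<alpha>)"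
proof -
  let ?\<phi> = "\<sigma> \<circ> \<alpha>"
  let ?Db = "{d \<in> D. c (orb ?\<phi> d)}"
  have fin: "finite D"
    using assms(1) unfolding comb_map_def by blast
  have bij: "bij_betw ?\<phi> D D"
    using comb_map_bij_face[OF assms(1)] .
  have into: "\<And>x. x \<in> D \<Longrightarrow> ?\<phi> x \<in> D"
    using bij_betwE[OF bij] by blast
  have closed: "orb ?\<phi> d \<subseteq> ?Db" if "d \<in> ?Db" for d
  proof
    fix x assume x: "x \<in> orb ?\<phi> d"
    have d: "d \<in> D" "c (orb ?\<phi> d)"
      using that by simp_all
    have "x \<in> D"
      using orb_subset[of D ?\<phi>, OF into d(1)] x by blast
    moreover have "orb ?\<phi> x = orb ?\<phi> d"
      using orb_eq[OF fin bij d(1) x] .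
    ultimately show "x \<in> ?Db"
      using d(2) by simp
  qed
  have black: "{g \<in> faces_of D \<alpha> \<sigma>. c g} = orb ?\<phi> ` ?Db"
    unfolding faces_of_def by auto
  have "3 * card (orb ?\<phi> ` ?Db) \<le> (\<Sum>g \<in> orb ?\<phi> ` ?Db. card g)"
    using sum_bounded_below[of "orb ?\<phi> ` ?Db" 3 card] face_card_ge_3[OF assms]
    by (auto simp: mult.commute)
  also have "\<dots> = card ?Db"
    using card_eq_sum_card_orbs[OF fin bij _ closed] by auto
  also have "\<dots> = card (edges_of D \<alpha>)"
    using card_edges_eq_card_black_darts[OF assms(1,3)] by simp
  finally show ?thesis
    unfolding black .
qed

lemma ex_white_face:
  assumes "comb_map D \<alpha> \<sigma>" "proper_face_colouring D \<alpha> \<sigma> c" "d \<in> D"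
  shows "\<exists>g \<in> faces_of D \<alpha> \<sigma>. \<not> c g"
proof -
  have "orb (\<sigma> \<circ> \<alpha>) d \<in> faces_of D \<alpha> \<sigma>" "orb (\<sigma> \<circ> \<alpha>) (\<alpha> d) \<in> faces_of D \<alpha> \<sigma>"
    using assms(1,3) unfolding faces_of_def comb_map_def by blast+
  moreover have "c (orb (\<sigma> \<circ> \<alpha>) d) \<noteq> c (orb (\<sigma> \<circ> \<alpha>) (\<alpha> d))"
    using assms(2,3) unfolding proper_face_colouring_def by blast
  ultimately show ?thesis
    by (cases "c (orb (\<sigma> \<circ> \<alpha>) d)") auto
qed

theorem lemma2p4:
  fixes D :: "'d set" and \<alpha> \<sigma> :: "'d \<Rightarrow> 'd" and c :: "'d set \<Rightarrow> bool"
    and m :: nat and f :: "'d set"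
  assumes "in_P m D \<alpha> \<sigma> c"
    and "map_connected D \<alpha> \<sigma>"
    and "f \<in> faces_of D \<alpha> \<sigma>"
  defines "B \<equiv> card {g \<in> faces_of D \<alpha> \<sigma>. g \<noteq> f \<and> c g}"
    and "W \<equiv> card {g \<in> faces_of D \<alpha> \<sigma>. g \<noteq> f \<and> \<not> c g}"
  shows "(\<not> c f \<longrightarrow> int B - int W \<le> (int m - 1) div 2)
       \<and> (c f \<longrightarrow> int B - int W \<le> (int m - 5) div 2)"
proof -
  let ?F = "faces_of D \<alpha> \<sigma>"
  let ?Fb = "{g \<in> ?F. c g}" and ?Fw = "{g \<in> ?F. \<not> c g}"
  have cm: "comb_map D \<alpha> \<sigma>" and simple: "map_simple D \<alpha> \<sigma>"
    and col: "proper_face_colouring D \<alpha> \<sigma> c"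
    and euler: "int m - int (card (edges_of D \<alpha>)) + int (card ?F) = 2"
    using assms(1) unfolding in_P_def spherical_def by auto
  have "finite ?F"
    using cm unfolding faces_of_def comb_map_def by simp
  then have faces: "card ?F = card ?Fb + card ?Fw"
    by (subst card_Un_disjoint[symmetric]) (auto intro: arg_cong[where f = card])
  have black: "3 * card ?Fb \<le> card (edges_of D \<alpha>)"
    using three_black_faces_le_edges[OF cm simple col] .
  obtain d where "d \<in> D"
    using assms(3) unfolding faces_of_def by blast
  then have white: "card ?Fw \<ge> 1"
    using ex_white_face[OF cm col] \<open>finite ?F\<close> by (simp add: Suc_le_eq card_gt_0_iff) blast
  have "B = card (?Fb - {f})" "W = card (?Fw - {f})"
    unfolding B_def W_def by (auto intro: arg_cong[where f = card])
  moreover have "card ?Fb \<ge> 1" if "c f"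
    using that assms(3) \<open>finite ?F\<close> by (simp add: Suc_le_eq card_gt_0_iff) blast
  ultimately have "int B = int (card ?Fb) - (if c f then 1 else 0)"
    "int W = int (card ?Fw) - (if c f then 0 else 1)"
    using assms(3) white by (auto simp: card_Diff_singleton_if)
  then show ?thesis
    using euler faces black white by auto
qed

end
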